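(* The finite derivative test $\mathcal D$ is error-free.
   Context: Let $\Omega=\{0,1\}$, $\Omega^\infty$ the set of infinite sequences $\omega=(\omega_1,\omega_2,\dots)$, and $\omega^t=(\omega_1,\dots,\omega_t)$ (also used for the cylinder set of all sequences with this prefix; $\omega^0=\emptyset$). $\mathcal G_t$ is the $\sigma$-algebra generated by the length-$t$ cylinders and $\mathcal G_\infty$ the $\sigma$-algebra generated by all cylinders. $\Delta(\Omega)$ is the set of probability distributions on $\Omega$; for $p\in\Delta(\Omega)$ and $x\in\Omega$, $p[x]$ is the probability of $x$. A forecasting strategy is a map $f:\bigcup_{t\ge0}(\Omega\times\Delta(\Omega)\times\Delta(\Omega))^t\to\Delta(\Omega)$; $F$ is the set of all forecasting strategies. Given an ordered pair $\vec f=(f,g)\in F\times F$ and $\omega\in\Omega^\infty$, the play path $(\omega,\vec f)$ is defined recursively: $(\omega,\vec f)^0=\emptyset$ and its $t$-th entry is $(\omega_t,f((\omega,\vec f)^{t-1}),g((\omega,\vec f)^{t-1}))$, where $(\omega,\vec f)^t$ is the prefix of length $t$. The pair $\vec f$ induces two probability measures on $(\Omega^\infty,\mathcal G_\infty)$, again denoted $f$ and $g$ (they depend on the pair), determined by $f(\omega^t)=\prod_{n=1}^t f((\omega,\vec f)^{n-1})[\omega_n]$ and $g(\omega^t)=\prod_{n=1}^t g((\omega,\vec f)^{n-1})[\omega_n]$. A (cardinal comparison) test is a sequence $T=(T_t)_{t>0}$ of $\mathcal G_t$-measurable functions $T_t:(\Omega\times\Delta(\Omega)\times\Delta(\Omega))^\infty\to[0,1]$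 (depending only on the first $t$ entries); write $T_t(\omega,\vec f)=T_t((\omega,\vec f))$ and $T(\omega,\vec f)=\lim_t T_t(\omega,\vec f)$ whenever the limit exists. For $\epsilon\in(0,1)$ let $L^{\vec f}_{T,\epsilon}=\{\omega:T(\omega,\vec f)\text{ exists and }>\epsilon\}$ and $R^{\vec f}_{T,\epsilon}=\{\omega:T(\omega,\vec f)\text{ exists and }<\epsilon\}$. $T$ is error-free if for all $\vec f=(f,g)\in F\times F$ and every measurable $A\subseteq\Omega^\infty$: for all $\epsilon\in(0,\frac12)$, $f(A\cap R^{\vec f}_{T,\epsilon})\le\frac{\epsilon}{1-\epsilon}\,g(A\cap R^{\vec f}_{T,\epsilon})$, and for all $\epsilon\in(\frac12,1)$, $g(A\cap L^{\vec f}_{T,\epsilon})\le\frac{1-\epsilon}{\epsilon}\,f(A\cap L^{\vec f}_{T,\epsilon})$ (with $f,g$ the measures induced by $\vec f$). The finite derivative test $\mathcal D$ is defined for $t\ge0$ by $\mathcal D_{t+1}(\omega,\vec f)=\frac{f(\omega^t)}{f(\omega^t)+g(\omega^t)}$ if $f(\omega^t)>0$ or $g(\omega^t)>0$, and $\frac12$ otherwise. *)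

theory Defs
  imports "HOL-Probability.Probability"
begin

text \<open>Outcomes: \<Omega> = {0,1} is rendered as bool (True = 1).
  Forecasts \<Delta>(\<Omega>) are rendered as bool pmf; p[x] is pmf p x.
  An infinite sequence \<omega> = (\<omega>_1, \<omega>_2, ...) is a function nat => bool with
  \<omega> i standing for \<omega>_(i+1).\<close>

type_synonym entry = "bool \<times> bool pmf \<times> bool pmf"
type_synonym strategy = "entry list \<Rightarrow> bool pmf"

fun play :: "strategy \<Rightarrow> strategy \<Rightarrow> (nat \<Rightarrow> bool) \<Rightarrow> nat \<Rightarrow> entry list" where
  "play f g \<omega> 0 = []"
| "play f g \<omega> (Suc t) = play f g \<omega> t @ [(\<omega> t, f (play f g \<omega> t), g (play f g \<omega> t))]"

definition Omega_inf :: "(nat \<Rightarrow> bool) measure" where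
  "Omega_inf = PiM UNIV (\<lambda>_. count_space UNIV)"

definition cyl :: "(nat \<Rightarrow> bool) \<Rightarrow> nat \<Rightarrow> (nat \<Rightarrow> bool) set" where
  "cyl \<omega> t = {\<omega>'. \<forall>i<t. \<omega>' i = \<omega> i}"

text \<open>mu is the measure on (\<Omega>^\<infinity>, G_\<infinity>) induced by the pair (f,g) using the forecasts
  of the strategy selected by sel (sel = fst gives the measure f, sel = snd gives g).\<close>
definition induced_measure ::
  "strategy \<Rightarrow> strategy \<Rightarrow> (bool pmf \<times> bool pmf \<Rightarrow> bool pmf) \<Rightarrow> (nat \<Rightarrow> bool) measure \<Rightarrow> bool" where
  "induced_measure f g sel \<mu> \<longleftrightarrow>
     prob_space \<mu> \<and> sets \<mu> = sets Omega_inf \<and>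
     (\<forall>\<omega> t. measure \<mu> (cyl \<omega> t) =
        (\<Prod>n<t. pmf (sel (f (play f g \<omega> n), g (play f g \<omega> n))) (\<omega> n)))"

text \<open>A test: T t h is T_t evaluated on a play path whose length-t prefix is h
  (T_t depends only on the first t entries). Only t > 0 is used.\<close>
type_synonym test = "nat \<Rightarrow> entry list \<Rightarrow> real"

definition L_set :: "test \<Rightarrow> strategy \<Rightarrow> strategy \<Rightarrow> real \<Rightarrow> (nat \<Rightarrow> bool) set" where
  "L_set T f g \<epsilon> = {\<omega>. \<exists>l. ((\<lambda>t. T t (play f g \<omega> t)) \<longlonglongrightarrow> l) \<and> l > \<epsilon>}"

definition R_set :: "test \<Rightarrow> strategy \<Rightarrow> strategy \<Rightarrow> real \<Rightarrow> (nat \<Rightarrow> bool) set" where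
  "R_set T f g \<epsilon> = {\<omega>. \<exists>l. ((\<lambda>t. T t (play f g \<omega> t)) \<longlonglongrightarrow> l) \<and> l < \<epsilon>}"

definition error_free :: "test \<Rightarrow> bool" where
  "error_free T \<longleftrightarrow>
    (\<forall>f g \<mu>f \<mu>g. induced_measure f g fst \<mu>f \<longrightarrow> induced_measure f g snd \<mu>g \<longrightarrow>
      (\<forall>A \<in> sets Omega_inf.
        (\<forall>\<epsilon>::real. 0 < \<epsilon> \<and> \<epsilon> < 1/2 \<longrightarrow>
           measure \<mu>f (A \<inter> R_set T f g \<epsilon>) \<le> \<epsilon> / (1 - \<epsilon>) * measure \<mu>g (A \<inter> R_set T f g \<epsilon>)) \<and>
        (\<forall>\<epsilon>::real. 1/2 < \<epsilon> \<and> \<epsilon> < 1 \<longrightarrow>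
           measure \<mu>g (A \<inter> L_set T f g \<epsilon>) \<le> (1 - \<epsilon>) / \<epsilon> * measure \<mu>f (A \<inter> L_set T f g \<epsilon>))))"

text \<open>f(\<omega>^t) and g(\<omega>^t) read off from the first t entries of the play path:
  the t-th entry is (\<omega>_t, f(..), g(..)).\<close>
definition prefix_prob_f :: "entry list \<Rightarrow> nat \<Rightarrow> real" where
  "prefix_prob_f h t = (\<Prod>n<t. pmf (fst (snd (h ! n))) (fst (h ! n)))"

definition prefix_prob_g :: "entry list \<Rightarrow> nat \<Rightarrow> real" where
  "prefix_prob_g h t = (\<Prod>n<t. pmf (snd (snd (h ! n))) (fst (h ! n)))"

text \<open>The finite derivative test: D_(t+1) = f(\<omega>^t) / (f(\<omega>^t) + g(\<omega>^t)), or 1/2.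
  D_0 is irrelevant (tests are indexed by t > 0); set to 1/2.\<close>
fun deriv_test :: test where
  "deriv_test 0 h = 1/2"
| "deriv_test (Suc t) h =
     (let a = prefix_prob_f h t; b = prefix_prob_g h t in
      if a > 0 \<or> b > 0 then a / (a + b) else 1/2)"

end

theory Submission imports Defs begin

text \<open>If the test converges along \<open>\<omega>\<close> to a limit below \<open>\<epsilon>\<close>, then eventually
  \<open>f(\<omega>\<^sup>t) / (f(\<omega>\<^sup>t) + g(\<omega>\<^sup>t)) < \<epsilon>\<close>, i.e. \<open>f(\<omega>\<^sup>t) \<le> \<epsilon>/(1-\<epsilon>) g(\<omega>\<^sup>t)\<close> for all large \<open>t\<close>.
  It therefore suffices that a set on which the cylinder probabilities of two finite measures
  eventually satisfy \<open>\<mu>\<^sub>1(\<omega>\<^sup>t) \<le> c \<mu>\<^sub>2(\<omega>\<^sup>t)\<close> has \<open>\<mu>\<^sub>1\<close>-measure at most \<open>c\<close> times its \<open>\<mu>\<^sub>2\<close>-measure.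
  For a set determined by a finite prefix, intersected with the set where the inequality holds
  from time \<open>N\<close> on, this follows by summing over cylinders of a late enough length; the monotone
  class theorem extends it to all measurable sets, and continuity from below in \<open>N\<close> removes the
  intersection. For \<open>\<epsilon> > 1/2\<close> the roles of \<open>f\<close> and \<open>g\<close> are exchanged.\<close>

section \<open>The monotone class theorem\<close>

inductive_set monotone_class_closure :: "'a set set \<Rightarrow> 'a set set" for G where
  Basic: "S \<in> G \<Longrightarrow> S \<in> monotone_class_closure G"
| incseq_UN: "(\<And>i. A i \<in> monotone_class_closure G) \<Longrightarrow> incseq A \<Longrightarrow>
    (\<Union>i. A i) \<in> monotone_class_closure G"
| decseq_INT: "(\<And>i. A i \<in> monotone_class_closure G) \<Longrightarrow> decseq A \<Longrightarrow>
    (\<Inter>i. A i) \<in> monotone_class_closure G"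

lemma (in algebra) monotone_class_closure_Diff:
  "S \<in> monotone_class_closure M \<Longrightarrow> \<Omega> - S \<in> monotone_class_closure M"
proof (induction rule: monotone_class_closure.induct)
  case (Basic S)
  then show ?case by (auto intro: monotone_class_closure.Basic)
next
  case (incseq_UN A)
  have "(\<Inter>i. \<Omega> - A i) \<in> monotone_class_closure M"
    using incseq_UN.hyps(2)
    by (intro monotone_class_closure.decseq_INT incseq_UN.IH) (auto simp: incseq_def decseq_def)
  moreover have "\<Omega> - (\<Union>i. A i) = (\<Inter>i. \<Omega> - A i)" by auto
  ultimately show ?case by (simp only:)
next
  case (decseq_INT A)
  have "(\<Union>i. \<Omega> - A i) \<in> monotone_class_closure M"
    using decseq_INT.hyps(2)
    by (intro monotone_class_closure.incseq_UN decseq_INT.IH) (auto simp: incseq_def decseq_def)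
  moreover have "\<Omega> - (\<Inter>i. A i) = (\<Union>i. \<Omega> - A i)" by auto
  ultimately show ?case by (simp only:)
qed

lemma monotone_class_closure_Un_right:
  assumes "\<And>a. a \<in> G \<Longrightarrow> a \<union> b \<in> monotone_class_closure G"
  shows "S \<in> monotone_class_closure G \<Longrightarrow> S \<union> b \<in> monotone_class_closure G"
proof (induction rule: monotone_class_closure.induct)
  case (Basic S)
  then show ?case by (rule assms)
next
  case (incseq_UN A)
  have "(\<Union>i. A i \<union> b) \<in> monotone_class_closure G"
    using incseq_UN.hyps(2)
    by (intro monotone_class_closure.incseq_UN incseq_UN.IH) (auto simp: incseq_def)
  moreover have "(\<Union>i. A i) \<union> b = (\<Union>i. A i \<union> b)" by auto
  ultimately show ?case by (simp only:)
next
  case (decseq_INT A)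
  have "(\<Inter>i. A i \<union> b) \<in> monotone_class_closure G"
    using decseq_INT.hyps(2)
    by (intro monotone_class_closure.decseq_INT decseq_INT.IH) (auto simp: decseq_def)
  moreover have "(\<Inter>i. A i) \<union> b = (\<Inter>i. A i \<union> b)" by auto
  ultimately show ?case by (simp only:)
qed

lemma (in algebra) monotone_class_closure_Un:
  assumes "S \<in> monotone_class_closure M" "T \<in> monotone_class_closure M"
  shows "S \<union> T \<in> monotone_class_closure M"
proof -
  have Un_sets: "S' \<union> b \<in> monotone_class_closure M"
    if "S' \<in> monotone_class_closure M" "b \<in> M" for S' b
    by (rule monotone_class_closure_Un_right[OF _ that(1)])
      (use that(2) in \<open>auto intro: monotone_class_closure.Basic\<close>)
  have "a \<union> T \<in> monotone_class_closure M" if "a \<in> M" for a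
    using Un_sets[OF assms(2) that] by (simp add: Un_commute)
  then show ?thesis
    by (rule monotone_class_closure_Un_right[OF _ assms(1)])
qed

theorem (in algebra) sigma_sets_eq_monotone_class_closure:
  "sigma_sets \<Omega> M = monotone_class_closure M"
proof
  show "monotone_class_closure M \<subseteq> sigma_sets \<Omega> M"
  proof
    fix S assume "S \<in> monotone_class_closure M"
    then show "S \<in> sigma_sets \<Omega> M"
    proof induction
      case (Basic S)
      then show ?case by (rule sigma_sets.Basic)
    next
      case (incseq_UN A)
      then show ?case by (simp add: sigma_sets.Union)
    next
      case (decseq_INT A)
      then show ?case by (simp add: sigma_sets_Inter[OF space_closed])
    qed
  qed
  show "sigma_sets \<Omega> M \<subseteq> monotone_class_closure M"
  proof
    fix S assume "S \<in> sigma_sets \<Omega> M"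
    then show "S \<in> monotone_class_closure M"
    proof induction
      case (Basic a)
      then show ?case by (rule monotone_class_closure.Basic)
    next
      case Empty
      then show ?case by (auto intro: monotone_class_closure.Basic)
    next
      case (Compl a)
      then show ?case by (simp add: monotone_class_closure_Diff)
    next
      case (Union A)
      define B where "B n = (\<Union>i\<le>n. A i)" for n
      have "B n \<in> monotone_class_closure M" for n
      proof (induction n)
        case 0
        then show ?case by (simp add: B_def Union.IH)
      next
        case (Suc n)
        have "B (Suc n) = B n \<union> A (Suc n)"
          by (auto simp: B_def atMost_Suc)
        then show ?case
          using monotone_class_closure_Un[OF Suc.IH Union.IH] by simp
      qed
      moreover have "incseq B"
        unfolding incseq_def B_def by (meson UN_mono atMost_subset_iff order_refl)
      ultimately have "(\<Union>n. B n) \<in> monotone_class_closure M"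
        by (rule monotone_class_closure.incseq_UN)
      moreover have "(\<Union>n. B n) = (\<Union>i. A i)"
        by (auto simp: B_def)
      ultimately show ?case by simp
    qed
  qed
qed

text \<open>An inequality between measures is not preserved under complements, so Dynkin's
  \<open>\<pi>\<close>-\<open>\<lambda>\<close> theorem does not apply; it is preserved under monotone limits.\<close>

lemma measure_Int_le_of_generator:
  fixes c :: real
  assumes fin1: "finite_measure M1" and fin2: "finite_measure M2" and alg: "algebra \<Omega> G"
    and sets1: "sets M1 = sigma_sets \<Omega> G" and sets2: "sets M2 = sigma_sets \<Omega> G"
    and B: "B \<in> sigma_sets \<Omega> G"
    and le: "\<And>A. A \<in> G \<Longrightarrow> measure M1 (A \<inter> B) \<le> c * measure M2 (A \<inter> B)"
    and A: "A \<in> sigma_sets \<Omega> G"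
  shows "measure M1 (A \<inter> B) \<le> c * measure M2 (A \<inter> B)"
proof -
  interpret M1: finite_measure M1 by (rule fin1)
  interpret M2: finite_measure M2 by (rule fin2)
  interpret G: algebra \<Omega> G by (rule alg)
  have Int_sets: "range (\<lambda>i. A i \<inter> B) \<subseteq> sets M1" "range (\<lambda>i. A i \<inter> B) \<subseteq> sets M2"
    if "\<And>i. A i \<in> monotone_class_closure G" for A :: "nat \<Rightarrow> _"
  proof -
    have "A i \<in> sets M1" "A i \<in> sets M2" for i
      using that sets1 sets2 G.sigma_sets_eq_monotone_class_closure by simp_all
    moreover have "B \<in> sets M1" "B \<in> sets M2"
      using B sets1 sets2 by simp_all
    ultimately show "range (\<lambda>i. A i \<inter> B) \<subseteq> sets M1" "range (\<lambda>i. A i \<inter> B) \<subseteq> sets M2"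
      by (auto intro!: sets.Int)
  qed
  have "A \<in> monotone_class_closure G"
    using A G.sigma_sets_eq_monotone_class_closure by simp
  then show ?thesis
  proof induction
    case (Basic A)
    then show ?case by (rule le)
  next
    case (incseq_UN A)
    have "incseq (\<lambda>i. A i \<inter> B)"
      using incseq_UN.hyps(2) by (auto simp: incseq_def)
    then have "(\<lambda>i. measure M1 (A i \<inter> B)) \<longlonglongrightarrow> measure M1 ((\<Union>i. A i) \<inter> B)"
      "(\<lambda>i. c * measure M2 (A i \<inter> B)) \<longlonglongrightarrow> c * measure M2 ((\<Union>i. A i) \<inter> B)"
      using M1.finite_Lim_measure_incseq[OF Int_sets(1)] M2.finite_Lim_measure_incseq[OF Int_sets(2)]
        incseq_UN.hyps(1)
      by (auto intro: tendsto_mult_left)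
    then show ?case by (rule LIMSEQ_le) (use incseq_UN.IH in auto)
  next
    case (decseq_INT A)
    have "decseq (\<lambda>i. A i \<inter> B)"
      using decseq_INT.hyps(2) by (auto simp: decseq_def)
    then have "(\<lambda>i. measure M1 (A i \<inter> B)) \<longlonglongrightarrow> measure M1 ((\<Inter>i. A i) \<inter> B)"
      "(\<lambda>i. c * measure M2 (A i \<inter> B)) \<longlonglongrightarrow> c * measure M2 ((\<Inter>i. A i) \<inter> B)"
      using M1.finite_Lim_measure_decseq[OF Int_sets(1)] M2.finite_Lim_measure_decseq[OF Int_sets(2)]
        decseq_INT.hyps(1)
      by (auto intro: tendsto_mult_left)
    then show ?case by (rule LIMSEQ_le) (use decseq_INT.IH in auto)
  qed
qed

section \<open>Sets determined by finite prefixes\<close>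

definition prefix_determined :: "nat \<Rightarrow> (nat \<Rightarrow> 'a) set \<Rightarrow> bool" where
  "prefix_determined t S \<longleftrightarrow> (\<forall>\<omega> \<omega>'. (\<forall>i<t. \<omega> i = \<omega>' i) \<longrightarrow> \<omega> \<in> S \<longrightarrow> \<omega>' \<in> S)"

definition prefix_sets :: "(nat \<Rightarrow> 'a) set set" where
  "prefix_sets = {S. \<exists>t. prefix_determined t S}"

lemma prefix_determined_mono: "prefix_determined t S \<Longrightarrow> t \<le> u \<Longrightarrow> prefix_determined u S"
  unfolding prefix_determined_def by (meson less_le_trans)

lemma prefix_determined_Int:
  "prefix_determined t S \<Longrightarrow> prefix_determined t T \<Longrightarrow> prefix_determined t (S \<inter> T)"
  unfolding prefix_determined_def by blast

lemma prefix_determined_INT: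
  "(\<And>i. i \<in> I \<Longrightarrow> prefix_determined t (A i)) \<Longrightarrow> prefix_determined t (\<Inter>i\<in>I. A i)"
  unfolding prefix_determined_def by blast

lemma prefix_determined_Un:
  "prefix_determined t S \<Longrightarrow> prefix_determined t T \<Longrightarrow> prefix_determined t (S \<union> T)"
  unfolding prefix_determined_def by blast

lemma prefix_determined_Compl: "prefix_determined t S \<Longrightarrow> prefix_determined t (- S)"
  unfolding prefix_determined_def by (metis ComplD ComplI)

lemma algebra_prefix_sets: "algebra UNIV prefix_sets"
  unfolding algebra_iff_Un
proof (intro conjI ballI)
  show "{} \<in> prefix_sets"
    by (auto simp: prefix_sets_def prefix_determined_def)
next
  fix S assume "S \<in> prefix_sets"
  then show "UNIV - S \<in> prefix_sets"
    by (auto simp: prefix_sets_def Compl_eq_Diff_UNIV[symmetric] intro: prefix_determined_Compl)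
next
  fix S T :: "(nat \<Rightarrow> 'a) set" assume "S \<in> prefix_sets" "T \<in> prefix_sets"
  then obtain s t where "prefix_determined s S" "prefix_determined t T"
    by (auto simp: prefix_sets_def)
  then have "prefix_determined (max s t) (S \<union> T)"
    by (intro prefix_determined_Un) (auto elim: prefix_determined_mono)
  then show "S \<union> T \<in> prefix_sets"
    by (auto simp: prefix_sets_def)
qed simp

lemma cyl_eq_prefix: "cyl \<omega> t = {\<omega>'. map \<omega>' [0..<t] = map \<omega> [0..<t]}"
  by (auto simp: cyl_def)

lemma prefix_determined_cyl_pred: "prefix_determined t {\<omega>. P (cyl \<omega> t)}"
  unfolding prefix_determined_def cyl_eq_prefix by simp

lemma prefix_determined_eq_UN_cyl:
  "prefix_determined t S \<Longrightarrow> S = (\<Union>\<omega>\<in>S. cyl \<omega> t)"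
  unfolding prefix_determined_def cyl_def by blast

lemma space_Omega_inf: "space Omega_inf = UNIV"
  by (simp add: Omega_inf_def space_PiM)

lemma cyl_sets: "cyl \<omega> t \<in> sets Omega_inf"
proof (induction t)
  case 0
  have "cyl \<omega> 0 = space Omega_inf"
    by (simp add: cyl_def space_Omega_inf)
  then show ?case by simp
next
  case (Suc t)
  have "(\<lambda>x. x t) \<in> measurable Omega_inf (count_space UNIV)"
    unfolding Omega_inf_def by (rule measurable_component_singleton) simp
  then have "(\<lambda>x. x t) -` {\<omega> t} \<inter> space Omega_inf \<in> sets Omega_inf"
    by (rule measurable_sets) simp
  then have "{x. x t = \<omega> t} \<in> sets Omega_inf"
    by (simp add: space_Omega_inf vimage_def)
  moreover have "cyl \<omega> (Suc t) = cyl \<omega> t \<inter> {x. x t = \<omega> t}"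
    by (auto simp: cyl_def less_Suc_eq)
  ultimately show ?case using Suc by simp
qed

lemma cyl_disjoint: "cyl \<omega> t \<noteq> cyl \<omega>' t \<Longrightarrow> cyl \<omega> t \<inter> cyl \<omega>' t = {}"
  unfolding cyl_eq_prefix by auto

lemma finite_cyl_image: "finite ((\<lambda>\<omega>. cyl \<omega> t) ` S)"
proof -
  have "(\<lambda>\<omega>. cyl \<omega> t) ` S = (\<lambda>xs. {\<omega>'. map \<omega>' [0..<t] = xs}) ` (\<lambda>\<omega>. map \<omega> [0..<t]) ` S"
    by (simp only: cyl_eq_prefix image_image)
  moreover have "finite ((\<lambda>\<omega>. map \<omega> [0..<t]) ` S)"
    by (rule finite_subset[OF _ finite_lists_length_eq[of "UNIV :: bool set" t]]) auto
  ultimately show ?thesis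
    by simp
qed

lemma measure_prefix_determined_eq_sum:
  assumes fin: "finite_measure M" and sets: "sets M = sets Omega_inf" and S: "prefix_determined t S"
  shows "measure M S = (\<Sum>C\<in>(\<lambda>\<omega>. cyl \<omega> t) ` S. measure M C)"
proof -
  interpret finite_measure M by (rule fin)
  have "measure M S = measure M (\<Union>C\<in>(\<lambda>\<omega>. cyl \<omega> t) ` S. C)"
    using prefix_determined_eq_UN_cyl[OF S] by simp
  also have "\<dots> = (\<Sum>C\<in>(\<lambda>\<omega>. cyl \<omega> t) ` S. measure M C)"
    by (rule finite_measure_finite_Union)
      (use finite_cyl_image cyl_sets sets cyl_disjoint in \<open>auto simp: disjoint_family_on_def\<close>)
  finally show ?thesis .
qed

lemma prefix_sets_subset_sets: "prefix_sets \<subseteq> sets Omega_inf"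
proof
  fix S :: "(nat \<Rightarrow> bool) set" assume "S \<in> prefix_sets"
  then obtain t where "prefix_determined t S"
    by (auto simp: prefix_sets_def)
  then have "S = (\<Union>C\<in>(\<lambda>\<omega>. cyl \<omega> t) ` S. C)"
    using prefix_determined_eq_UN_cyl by simp
  also have "\<dots> \<in> sets Omega_inf"
    using finite_cyl_image cyl_sets by (intro sets.finite_UN) auto
  finally show "S \<in> sets Omega_inf" .
qed

lemma sets_Omega_inf_eq_sigma_prefix_sets: "sets Omega_inf = sigma_sets UNIV prefix_sets"
proof
  have "sets Omega_inf = sigma_sets UNIV {{f. f i \<in> A} | i A. A \<in> sets (count_space (UNIV :: bool set))}"
    unfolding Omega_inf_def sets_PiM_single by simp
  also have "\<dots> \<subseteq> sigma_sets UNIV prefix_sets"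
  proof (rule sigma_sets_mono, clarify)
    fix i and A :: "bool set"
    have "prefix_determined (Suc i) {f. f i \<in> A}"
      unfolding prefix_determined_def by auto
    then show "{f. f i \<in> A} \<in> sigma_sets UNIV prefix_sets"
      by (auto simp: prefix_sets_def)
  qed
  finally show "sets Omega_inf \<subseteq> sigma_sets UNIV prefix_sets" .
  show "sigma_sets UNIV prefix_sets \<subseteq> sets Omega_inf"
    using sets.sigma_sets_subset[OF prefix_sets_subset_sets] by (simp add: space_Omega_inf)
qed

lemma measure_le_if_prefix_determined:
  fixes c :: real
  assumes fin1: "finite_measure M1" and fin2: "finite_measure M2"
    and sets1: "sets M1 = sets Omega_inf" and sets2: "sets M2 = sets Omega_inf"
    and S: "prefix_determined t S"
    and le: "\<And>\<omega>. \<omega> \<in> S \<Longrightarrow> measure M1 (cyl \<omega> t) \<le> c * measure M2 (cyl \<omega> t)"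
  shows "measure M1 S \<le> c * measure M2 S"
proof -
  have "measure M1 S = (\<Sum>C\<in>(\<lambda>\<omega>. cyl \<omega> t) ` S. measure M1 C)"
    by (rule measure_prefix_determined_eq_sum[OF fin1 sets1 S])
  also have "\<dots> \<le> (\<Sum>C\<in>(\<lambda>\<omega>. cyl \<omega> t) ` S. c * measure M2 C)"
    using le by (auto intro: sum_mono)
  also have "\<dots> = c * measure M2 S"
    by (simp add: measure_prefix_determined_eq_sum[OF fin2 sets2 S] sum_distrib_left)
  finally show ?thesis .
qed

definition cyl_dominated_from ::
  "(nat \<Rightarrow> bool) measure \<Rightarrow> (nat \<Rightarrow> bool) measure \<Rightarrow> real \<Rightarrow> nat \<Rightarrow> (nat \<Rightarrow> bool) set" where
  "cyl_dominated_from M1 M2 c N = {\<omega>. \<forall>t\<ge>N. measure M1 (cyl \<omega> t) \<le> c * measure M2 (cyl \<omega> t)}"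

lemma cyl_dominated_from_sets: "cyl_dominated_from M1 M2 c N \<in> sets Omega_inf"
proof -
  have "cyl_dominated_from M1 M2 c N =
      (\<Inter>t\<in>{N..}. {\<omega>. measure M1 (cyl \<omega> t) \<le> c * measure M2 (cyl \<omega> t)})"
    by (auto simp: cyl_dominated_from_def)
  also have "\<dots> \<in> sets Omega_inf"
    using prefix_determined_cyl_pred[where P = "\<lambda>C. measure M1 C \<le> c * measure M2 C"]
      prefix_sets_subset_sets sets.top[of Omega_inf]
    by (intro sets.countable_INT'') (auto simp: prefix_sets_def space_Omega_inf)
  finally show ?thesis .
qed

lemma measure_Int_cyl_dominated_from_le_if_prefix_determined:
  fixes c :: real
  assumes fin1: "finite_measure M1" and fin2: "finite_measure M2"
    and sets1: "sets M1 = sets Omega_inf" and sets2: "sets M2 = sets Omega_inf"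
    and A: "prefix_determined s A"
  shows "measure M1 (A \<inter> cyl_dominated_from M1 M2 c N) \<le> c * measure M2 (A \<inter> cyl_dominated_from M1 M2 c N)"
proof -
  interpret M1: finite_measure M1 by (rule fin1)
  interpret M2: finite_measure M2 by (rule fin2)
  define Q where "Q t = {\<omega>. measure M1 (cyl \<omega> t) \<le> c * measure M2 (cyl \<omega> t)}" for t
  \<comment> \<open>Running \<open>t\<close> up to \<open>N + T + s\<close> makes \<open>D T\<close> determined at a time where the cylinder inequality holds on it.\<close>
  define D where "D T = A \<inter> (\<Inter>t\<in>{N..N + T + s}. Q t)" for T
  have D_determined: "prefix_determined (N + T + s) (D T)" for T
    unfolding D_def Q_def using A prefix_determined_cyl_pred[where P = "\<lambda>C. measure M1 C \<le> c * measure M2 C"]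
    by (intro prefix_determined_Int prefix_determined_INT) (auto intro: prefix_determined_mono)
  have D_sets: "range D \<subseteq> sets M1" "range D \<subseteq> sets M2"
    using D_determined prefix_sets_subset_sets sets1 sets2 by (auto simp: prefix_sets_def)
  have "decseq D"
    by (auto simp: decseq_def D_def)
  moreover have "(\<Inter>T. D T) = A \<inter> cyl_dominated_from M1 M2 c N"
  proof (intro equalityI subsetI)
    fix \<omega> assume \<omega>: "\<omega> \<in> (\<Inter>T. D T)"
    have "\<omega> \<in> Q t" if "N \<le> t" for t
      using \<omega>[THEN INT_D, of t] that by (simp add: D_def)
    moreover have "\<omega> \<in> A"
      using \<omega>[THEN INT_D, of 0] by (simp add: D_def)
    ultimately show "\<omega> \<in> A \<inter> cyl_dominated_from M1 M2 c N"
      by (simp add: cyl_dominated_from_def Q_def)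
  next
    fix \<omega> assume "\<omega> \<in> A \<inter> cyl_dominated_from M1 M2 c N"
    then show "\<omega> \<in> (\<Inter>T. D T)"
      by (simp add: D_def Q_def cyl_dominated_from_def)
  qed
  ultimately have "(\<lambda>T. measure M1 (D T)) \<longlonglongrightarrow> measure M1 (A \<inter> cyl_dominated_from M1 M2 c N)"
    "(\<lambda>T. c * measure M2 (D T)) \<longlonglongrightarrow> c * measure M2 (A \<inter> cyl_dominated_from M1 M2 c N)"
    using M1.finite_Lim_measure_decseq[OF D_sets(1)] M2.finite_Lim_measure_decseq[OF D_sets(2)]
    by (auto intro: tendsto_mult_left)
  moreover have "measure M1 (D T) \<le> c * measure M2 (D T)" for T
    by (rule measure_le_if_prefix_determined[OF fin1 fin2 sets1 sets2 D_determined])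
      (auto simp: D_def Q_def)
  ultimately show ?thesis
    by (intro LIMSEQ_le) auto
qed

lemma measure_Int_cyl_dominated_from_le:
  fixes c :: real
  assumes fin1: "finite_measure M1" and fin2: "finite_measure M2"
    and sets1: "sets M1 = sets Omega_inf" and sets2: "sets M2 = sets Omega_inf"
    and A: "A \<in> sets Omega_inf"
  shows "measure M1 (A \<inter> cyl_dominated_from M1 M2 c N) \<le> c * measure M2 (A \<inter> cyl_dominated_from M1 M2 c N)"
proof -
  note sigma = sets_Omega_inf_eq_sigma_prefix_sets
  have prefix_le:
    "measure M1 (A' \<inter> cyl_dominated_from M1 M2 c N) \<le> c * measure M2 (A' \<inter> cyl_dominated_from M1 M2 c N)"
    if "A' \<in> prefix_sets" for A'
    using that measure_Int_cyl_dominated_from_le_if_prefix_determined[OF fin1 fin2 sets1 sets2]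
    by (auto simp: prefix_sets_def)
  show ?thesis
    by (rule measure_Int_le_of_generator[OF fin1 fin2 algebra_prefix_sets sets1[unfolded sigma]
          sets2[unfolded sigma] cyl_dominated_from_sets[unfolded sigma] prefix_le A[unfolded sigma]])
qed

lemma measure_le_if_eventually_cyl_le:
  fixes c :: real
  assumes fin1: "finite_measure M1" and fin2: "finite_measure M2"
    and sets1: "sets M1 = sets Omega_inf" and sets2: "sets M2 = sets Omega_inf"
    and S: "S \<subseteq> {\<omega>. \<forall>\<^sub>F t in sequentially. measure M1 (cyl \<omega> t) \<le> c * measure M2 (cyl \<omega> t)}"
  shows "measure M1 S \<le> c * measure M2 S"
proof (cases "S \<in> sets Omega_inf")
  case True
  interpret M1: finite_measure M1 by (rule fin1)
  interpret M2: finite_measure M2 by (rule fin2)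
  let ?E = "cyl_dominated_from M1 M2 c"
  have inc: "incseq (\<lambda>N. S \<inter> ?E N)"
    by (auto simp: incseq_def cyl_dominated_from_def)
  have Int_sets: "range (\<lambda>N. S \<inter> ?E N) \<subseteq> sets M1" "range (\<lambda>N. S \<inter> ?E N) \<subseteq> sets M2"
    using True cyl_dominated_from_sets sets1 sets2 by auto
  have "S \<subseteq> (\<Union>N. ?E N)"
  proof
    fix \<omega> assume "\<omega> \<in> S"
    then obtain N where "\<forall>t\<ge>N. measure M1 (cyl \<omega> t) \<le> c * measure M2 (cyl \<omega> t)"
      using S by (auto simp: eventually_sequentially)
    then show "\<omega> \<in> (\<Union>N. ?E N)"
      by (auto simp: cyl_dominated_from_def)
  qed
  then have "(\<Union>N. S \<inter> ?E N) = S"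
    by blast
  then have "(\<lambda>N. measure M1 (S \<inter> ?E N)) \<longlonglongrightarrow> measure M1 S"
    "(\<lambda>N. c * measure M2 (S \<inter> ?E N)) \<longlonglongrightarrow> c * measure M2 S"
    using M1.finite_Lim_measure_incseq[OF Int_sets(1) inc] M2.finite_Lim_measure_incseq[OF Int_sets(2) inc]
    by (simp_all add: tendsto_mult_left)
  then show ?thesis
    by (rule LIMSEQ_le)
      (use measure_Int_cyl_dominated_from_le[OF fin1 fin2 sets1 sets2 True] in auto)
next
  case False
  then show ?thesis
    using sets1 sets2 by (simp add: measure_notin_sets)
qed

section \<open>The finite derivative test\<close>

definition relative_weight :: "real \<Rightarrow> real \<Rightarrow> real" where
  "relative_weight a b = (if a > 0 \<or> b > 0 then a / (a + b) else 1/2)"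

lemma relative_weight_less_imp_le:
  fixes a b e :: real
  assumes "relative_weight a b < e" "e < 1" "0 \<le> a" "0 \<le> b"
  shows "a \<le> e / (1 - e) * b"
proof (cases "a > 0 \<or> b > 0")
  case True
  then have "0 < a + b"
    using assms by auto
  then have "a < e * (a + b)"
    using assms(1) True by (simp add: relative_weight_def divide_less_eq)
  then have "a * (1 - e) \<le> e * b"
    by (simp add: algebra_simps)
  then show ?thesis
    using assms(2) by (simp add: field_simps)
next
  case False
  then show ?thesis
    using assms by simp
qed

lemma relative_weight_swap:
  fixes a b :: real
  assumes "0 \<le> a" "0 \<le> b" "a > 0 \<or> b > 0"
  shows "relative_weight b a = 1 - relative_weight a b"
proof -
  have "0 < a + b" "0 < b + a"
    using assms by auto
  then have "b / (b + a) = 1 - a / (a + b)"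
    by (simp add: divide_simps)
  then show ?thesis
    using assms(3) by (auto simp: relative_weight_def)
qed

lemma relative_weight_greater_imp_le:
  fixes a b e :: real
  assumes "e < relative_weight a b" "0 < e" "0 \<le> a" "0 \<le> b"
  shows "b \<le> (1 - e) / e * a"
proof (cases "a > 0 \<or> b > 0")
  case True
  then have "relative_weight b a < 1 - e"
    using assms relative_weight_swap by simp
  from relative_weight_less_imp_le[OF this _ assms(4,3)] show ?thesis
    using assms(2) by simp
next
  case False
  then show ?thesis
    using assms by simp
qed

lemma length_play: "length (play f g \<omega> t) = t"
  by (induction t) auto

lemma play_nth: "n < t \<Longrightarrow> play f g \<omega> t ! n = (\<omega> n, f (play f g \<omega> n), g (play f g \<omega> n))"
  by (induction t) (auto simp: nth_append length_play less_Suc_eq)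

lemma deriv_test_play:
  assumes "induced_measure f g fst \<mu>f" "induced_measure f g snd \<mu>g"
  shows "deriv_test (Suc t) (play f g \<omega> (Suc t)) =
    relative_weight (measure \<mu>f (cyl \<omega> t)) (measure \<mu>g (cyl \<omega> t))"
proof -
  have "play f g \<omega> (Suc t) ! n = (\<omega> n, f (play f g \<omega> n), g (play f g \<omega> n))" if "n < t" for n
    using that by (simp add: play_nth del: play.simps)
  then have "prefix_prob_f (play f g \<omega> (Suc t)) t = measure \<mu>f (cyl \<omega> t)"
    "prefix_prob_g (play f g \<omega> (Suc t)) t = measure \<mu>g (cyl \<omega> t)"
    using assms unfolding induced_measure_def prefix_prob_f_def prefix_prob_g_def
    by (auto intro!: prod.cong simp del: play.simps)
  then show ?thesis
    by (simp add: relative_weight_def Let_def)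
qed

lemma R_set_deriv_test_subset:
  assumes "induced_measure f g fst \<mu>f" "induced_measure f g snd \<mu>g" "e < 1"
  shows "R_set deriv_test f g e \<subseteq>
    {\<omega>. \<forall>\<^sub>F t in sequentially. measure \<mu>f (cyl \<omega> t) \<le> e / (1 - e) * measure \<mu>g (cyl \<omega> t)}"
proof
  fix \<omega> assume "\<omega> \<in> R_set deriv_test f g e"
  then obtain l where "(\<lambda>t. deriv_test t (play f g \<omega> t)) \<longlonglongrightarrow> l" "l < e"
    by (auto simp: R_set_def)
  then have "\<forall>\<^sub>F t in sequentially. deriv_test (Suc t) (play f g \<omega> (Suc t)) < e"
    by (intro order_tendstoD(2)[OF LIMSEQ_Suc])
  moreover have "measure \<mu>f (cyl \<omega> t) \<le> e / (1 - e) * measure \<mu>g (cyl \<omega> t)"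
    if "deriv_test (Suc t) (play f g \<omega> (Suc t)) < e" for t
    using that assms(3) unfolding deriv_test_play[OF assms(1,2)]
    by (intro relative_weight_less_imp_le) auto
  ultimately show "\<omega> \<in> {\<omega>. \<forall>\<^sub>F t in sequentially. measure \<mu>f (cyl \<omega> t) \<le> e / (1 - e) * measure \<mu>g (cyl \<omega> t)}"
    by (auto elim: eventually_mono)
qed

lemma L_set_deriv_test_subset:
  assumes "induced_measure f g fst \<mu>f" "induced_measure f g snd \<mu>g" "0 < e"
  shows "L_set deriv_test f g e \<subseteq>
    {\<omega>. \<forall>\<^sub>F t in sequentially. measure \<mu>g (cyl \<omega> t) \<le> (1 - e) / e * measure \<mu>f (cyl \<omega> t)}"
proof
  fix \<omega> assume "\<omega> \<in> L_set deriv_test f g e"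
  then obtain l where "(\<lambda>t. deriv_test t (play f g \<omega> t)) \<longlonglongrightarrow> l" "e < l"
    by (auto simp: L_set_def)
  then have "\<forall>\<^sub>F t in sequentially. e < deriv_test (Suc t) (play f g \<omega> (Suc t))"
    by (intro order_tendstoD(1)[OF LIMSEQ_Suc])
  moreover have "measure \<mu>g (cyl \<omega> t) \<le> (1 - e) / e * measure \<mu>f (cyl \<omega> t)"
    if "e < deriv_test (Suc t) (play f g \<omega> (Suc t))" for t
    using that assms(3) unfolding deriv_test_play[OF assms(1,2)]
    by (intro relative_weight_greater_imp_le) auto
  ultimately show "\<omega> \<in> {\<omega>. \<forall>\<^sub>F t in sequentially. measure \<mu>g (cyl \<omega> t) \<le> (1 - e) / e * measure \<mu>f (cyl \<omega> t)}"
    by (auto elim: eventually_mono)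
qed

theorem proposition2:
  shows "error_free deriv_test"
  unfolding error_free_def
proof (intro allI impI ballI conjI)
  fix f g \<mu>f \<mu>g A
  assume f: "induced_measure f g fst \<mu>f" and g: "induced_measure f g snd \<mu>g"
  then have fin: "finite_measure \<mu>f" "finite_measure \<mu>g"
    and sets: "sets \<mu>f = sets Omega_inf" "sets \<mu>g = sets Omega_inf"
    by (auto simp: induced_measure_def prob_space.finite_measure)
  show "measure \<mu>f (A \<inter> R_set deriv_test f g e) \<le> e / (1 - e) * measure \<mu>g (A \<inter> R_set deriv_test f g e)"
    if "0 < e \<and> e < 1/2" for e
  proof (rule measure_le_if_eventually_cyl_le[OF fin sets])
    show "A \<inter> R_set deriv_test f g e \<subseteq>
      {\<omega>. \<forall>\<^sub>F t in sequentially. measure \<mu>f (cyl \<omega> t) \<le> e / (1 - e) * measure \<mu>g (cyl \<omega> t)}"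
      using R_set_deriv_test_subset[OF f g, of e] that by auto
  qed
  show "measure \<mu>g (A \<inter> L_set deriv_test f g e) \<le> (1 - e) / e * measure \<mu>f (A \<inter> L_set deriv_test f g e)"
    if "1/2 < e \<and> e < 1" for e
  proof (rule measure_le_if_eventually_cyl_le[OF fin(2,1) sets(2,1)])
    show "A \<inter> L_set deriv_test f g e \<subseteq>
      {\<omega>. \<forall>\<^sub>F t in sequentially. measure \<mu>g (cyl \<omega> t) \<le> (1 - e) / e * measure \<mu>f (cyl \<omega> t)}"
      using L_set_deriv_test_subset[OF f g, of e] that by auto
  qed
qed

end
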